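(* Let $A$ be a real symmetric $n\times n$ matrix with symmetric tropical rank $r$, and let $\mathbf a_n$ denote its $n$th column. Define the $(n+1)\times(n+1)$ matrix $$A''=\begin{pmatrix}A&\mathbf a_n\\ \mathbf a_n^{T}&a_{n,n}\end{pmatrix},$$ obtained by duplicating the last column and then the last row. Then $A''$ is symmetric and has symmetric tropical rank $r$.
   Context: For an $r\times r$ submatrix of a real symmetric matrix $A$ with row index set $I$ and column index set $J$, each bijection $\rho:I\to J$ gives a monomial $\prod_{i\in I}X_{i,\rho(i)}$ in commuting variables subject to $X_{i,j}=X_{j,i}$, with value $\sum_{i\in I}A_{i,\rho(i)}$; the submatrix is symmetrically tropically singular if the minimum value is attained by at least two distinct monomials. The symmetric tropical rank of $A$ is the largest $r$ such that $A$ has an $r\times r$ submatrix (arbitrary row and column sets) that is not symmetrically tropically singular. *)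

theory Defs
  imports Complex_Main "HOL-Library.Multiset"
begin

text \<open>Matrices are functions nat => nat => real; an n x n matrix uses indices 0..<n.\<close>

definition symmetric_mat :: "nat \<Rightarrow> (nat \<Rightarrow> nat \<Rightarrow> real) \<Rightarrow> bool" where
  "symmetric_mat n A \<longleftrightarrow> (\<forall>i<n. \<forall>j<n. A i j = A j i)"

text \<open>Monomial prod_{i in I} X_{i, rho i} with X_{i,j} = X_{j,i}: a multiset of unordered
  index pairs, each pair represented as the set {i, rho i}.\<close>
definition sym_monomial :: "nat set \<Rightarrow> (nat \<Rightarrow> nat) \<Rightarrow> nat set multiset" where
  "sym_monomial I \<rho> = image_mset (\<lambda>i. {i, \<rho> i}) (mset_set I)"

definition trop_value :: "(nat \<Rightarrow> nat \<Rightarrow> real) \<Rightarrow> nat set \<Rightarrow> (nat \<Rightarrow> nat) \<Rightarrow> real" where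
  "trop_value A I \<rho> = (\<Sum>i\<in>I. A i (\<rho> i))"

definition trop_minimizer :: "(nat \<Rightarrow> nat \<Rightarrow> real) \<Rightarrow> nat set \<Rightarrow> nat set \<Rightarrow> (nat \<Rightarrow> nat) \<Rightarrow> bool" where
  "trop_minimizer A I J \<rho> \<longleftrightarrow> bij_betw \<rho> I J \<and>
     (\<forall>\<sigma>. bij_betw \<sigma> I J \<longrightarrow> trop_value A I \<rho> \<le> trop_value A I \<sigma>)"

definition sym_trop_singular :: "(nat \<Rightarrow> nat \<Rightarrow> real) \<Rightarrow> nat set \<Rightarrow> nat set \<Rightarrow> bool" where
  "sym_trop_singular A I J \<longleftrightarrow>
     (\<exists>\<rho>1 \<rho>2. trop_minimizer A I J \<rho>1 \<and> trop_minimizer A I J \<rho>2 \<and>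
        sym_monomial I \<rho>1 \<noteq> sym_monomial I \<rho>2)"

definition sym_trop_rank :: "nat \<Rightarrow> (nat \<Rightarrow> nat \<Rightarrow> real) \<Rightarrow> nat" where
  "sym_trop_rank n A = Max {r. \<exists>I J. I \<subseteq> {..<n} \<and> J \<subseteq> {..<n} \<and> card I = r \<and> card J = r \<and>
       \<not> sym_trop_singular A I J}"

definition dup_last :: "nat \<Rightarrow> (nat \<Rightarrow> nat \<Rightarrow> real) \<Rightarrow> (nat \<Rightarrow> nat \<Rightarrow> real)" where
  "dup_last n A = (\<lambda>i j. A (if i = n then n - 1 else i) (if j = n then n - 1 else j))"

end

theory Submission
  imports Defs "HOL-Library.FuncSet" "HOL-Combinatorics.Transposition"
begin

text \<open>In the enlarged matrix, indices \<open>n - 1\<close> and \<open>n\<close> carry equal rows and equal columns.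
  A square submatrix containing both copies of a row (or column) is symmetrically tropically
  singular: composing a minimizing bijection with the transposition of the two copies gives
  another minimizer, and its monomial differs because the bijection is injective. Hence every
  nonsingular submatrix contains at most one copy of each, and the relabelling \<open>n \<mapsto> n - 1\<close>
  identifies it with a submatrix of \<open>A\<close> of the same size, carrying minimizers and monomials
  along injectively.\<close>

lemma trop_minimizer_exists:
  assumes "finite I" "finite J" "card I = card J"
  obtains \<rho> where "trop_minimizer B I J \<rho>"
proof -
  let ?S = "{\<sigma> \<in> PiE I (\<lambda>_. J). bij_betw \<sigma> I J}"
  have "finite ?S"
    using assms by (simp add: finite_PiE)
  moreover obtain h where "bij_betw h I J"
    using assms finite_same_card_bij by blast
  then have "restrict h I \<in> ?S"
    by (auto dest: bij_betwE)
  ultimately obtain \<rho> where \<rho>: "is_arg_min (trop_value B I) (\<lambda>\<sigma>. \<sigma> \<in> ?S) \<rho>"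
    using ex_is_arg_min_if_finite by blast
  have "trop_value B I \<rho> \<le> trop_value B I \<sigma>" if "bij_betw \<sigma> I J" for \<sigma>
  proof -
    have "restrict \<sigma> I \<in> ?S"
      using that by (auto dest: bij_betwE)
    then have "trop_value B I \<rho> \<le> trop_value B I (restrict \<sigma> I)"
      using \<rho> by (auto simp: is_arg_min_linorder)
    also have "\<dots> = trop_value B I \<sigma>"
      by (simp add: trop_value_def)
    finally show ?thesis .
  qed
  with \<rho> show thesis
    by (intro that) (auto simp: trop_minimizer_def is_arg_min_def)
qed

lemma sym_monomial_remove2:
  assumes "finite I" "p \<in> I" "q \<in> I" "p \<noteq> q"
  shows "sym_monomial I \<rho> =
    {#{p, \<rho> p}, {q, \<rho> q}#} + image_mset (\<lambda>i. {i, \<rho> i}) (mset_set (I - {p, q}))"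
proof -
  have "mset_set I = add_mset p (mset_set (I - {p}))"
    using assms by (simp add: mset_set.remove)
  also have "mset_set (I - {p}) = add_mset q (mset_set (I - {p} - {q}))"
    using assms by (intro mset_set.remove) auto
  also have "I - {p} - {q} = I - {p, q}"
    by auto
  finally show ?thesis
    by (simp add: sym_monomial_def)
qed

lemma sym_monomial_comp_transpose_neq:
  assumes "finite I" "inj_on \<rho> I" "p \<in> I" "q \<in> I" "p \<noteq> q"
  shows "sym_monomial I (\<rho> \<circ> transpose p q) \<noteq> sym_monomial I \<rho>"
proof
  assume "sym_monomial I (\<rho> \<circ> transpose p q) = sym_monomial I \<rho>"
  moreover have "image_mset (\<lambda>i. {i, (\<rho> \<circ> transpose p q) i}) (mset_set (I - {p, q})) =
      image_mset (\<lambda>i. {i, \<rho> i}) (mset_set (I - {p, q}))"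
    using assms(1) by (intro image_mset_cong) auto
  ultimately have "{#{q, \<rho> p}, {p, \<rho> q}#} = {#{q, \<rho> q}, {p, \<rho> p}#}"
    unfolding sym_monomial_remove2[OF assms(1,3-5)] by simp
  then have "{p, \<rho> p} \<in># {#{q, \<rho> p}, {p, \<rho> q}#}"
    by simp
  then have "{p, \<rho> p} = {q, \<rho> p} \<or> {p, \<rho> p} = {p, \<rho> q}"
    by simp
  moreover have "\<rho> p \<noteq> \<rho> q"
    using assms by (auto dest: inj_onD)
  ultimately show False
    using assms(5) by (auto simp: doubleton_eq_iff)
qed

lemma sym_trop_singularI_transpose:
  assumes "finite I" "trop_minimizer B I J \<rho>" "p \<in> I" "q \<in> I" "p \<noteq> q"
    and "trop_value B I (\<rho> \<circ> transpose p q) = trop_value B I \<rho>"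
  shows "sym_trop_singular B I J"
proof -
  have "bij_betw \<rho> I J"
    using assms(2) by (simp add: trop_minimizer_def)
  then have "bij_betw (\<rho> \<circ> transpose p q) I J"
    using assms(3,4) by (intro bij_betw_trans[of "transpose p q" I I]) auto
  then have "trop_minimizer B I J (\<rho> \<circ> transpose p q)"
    using assms(2,6) by (simp add: trop_minimizer_def)
  moreover have "sym_monomial I (\<rho> \<circ> transpose p q) \<noteq> sym_monomial I \<rho>"
    using sym_monomial_comp_transpose_neq assms(1,3-5) \<open>bij_betw \<rho> I J\<close>
    by (simp add: bij_betw_def)
  ultimately show ?thesis
    using assms(2) unfolding sym_trop_singular_def by blast
qed

lemma sym_trop_singular_if_equal_rows:
  assumes "finite I" "finite J" "card I = card J" "p \<in> I" "q \<in> I" "p \<noteq> q"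
    and "\<And>j. B p j = B q j"
  shows "sym_trop_singular B I J"
proof -
  obtain \<rho> where \<rho>: "trop_minimizer B I J \<rho>"
    using trop_minimizer_exists assms(1-3) by blast
  have "trop_value B I (\<rho> \<circ> transpose p q) = (\<Sum>i\<in>I. B (transpose p q i) (\<rho> (transpose p q i)))"
    unfolding trop_value_def using assms(7) by (intro sum.cong) (auto simp: transpose_def)
  also have "\<dots> = trop_value B I \<rho>"
    unfolding trop_value_def using assms(4,5)
    by (intro sum.reindex_bij_betw[where g = "\<lambda>i. B i (\<rho> i)"]) simp
  finally show ?thesis
    using sym_trop_singularI_transpose \<rho> assms(1,4-6) by blast
qed

lemma sym_trop_singular_if_equal_columns:
  assumes "finite I" "finite J" "card I = card J" "p \<in> J" "q \<in> J" "p \<noteq> q"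
    and "\<And>i. B i p = B i q"
  shows "sym_trop_singular B I J"
proof -
  obtain \<rho> where \<rho>: "trop_minimizer B I J \<rho>"
    using trop_minimizer_exists assms(1-3) by blast
  then have "bij_betw \<rho> I J"
    by (simp add: trop_minimizer_def)
  then obtain i1 i2 where "i1 \<in> I" "i2 \<in> I" "\<rho> i1 = p" "\<rho> i2 = q"
    using assms(4,5) by (metis bij_betw_iff_bijections)
  moreover have "trop_value B I (\<rho> \<circ> transpose i1 i2) = trop_value B I \<rho>"
    unfolding trop_value_def using \<open>\<rho> i1 = p\<close> \<open>\<rho> i2 = q\<close> assms(7)
    by (intro sum.cong) (auto simp: transpose_def)
  ultimately show ?thesis
    using sym_trop_singularI_transpose \<rho> assms(1,6) by blast
qed

lemma trop_value_reindex:
  assumes "inj_on \<phi> I" "\<And>i. i \<in> I \<Longrightarrow> B i (\<tau> i) = A (\<phi> i) (\<sigma> (\<phi> i))"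
  shows "trop_value B I \<tau> = trop_value A (\<phi> ` I) \<sigma>"
  using assms by (simp add: trop_value_def sum.reindex)

lemma sym_monomial_reindex:
  assumes "finite I" "inj_on \<phi> I" "\<And>i. i \<in> I \<Longrightarrow> \<phi> (\<tau> i) = \<sigma> (\<phi> i)"
  shows "image_mset (image \<phi>) (sym_monomial I \<tau>) = sym_monomial (\<phi> ` I) \<sigma>"
proof -
  have "image_mset (image \<phi>) (sym_monomial I \<tau>) = image_mset (\<lambda>i. {\<phi> i, \<sigma> (\<phi> i)}) (mset_set I)"
    unfolding sym_monomial_def image_mset.compositionality
    using assms(1,3) by (intro image_mset_cong) auto
  also have "\<dots> = sym_monomial (\<phi> ` I) \<sigma>"
    by (simp add: sym_monomial_def image_mset_mset_set[OF assms(2), symmetric]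
        image_mset.compositionality comp_def)
  finally show ?thesis .
qed

lemma trop_minimizer_pullback:
  assumes "inj_on \<phi> I" "inj_on \<phi> J"
    and entries: "\<And>i j. i \<in> I \<Longrightarrow> j \<in> J \<Longrightarrow> B i j = A (\<phi> i) (\<phi> j)"
    and \<sigma>: "trop_minimizer A (\<phi> ` I) (\<phi> ` J) \<sigma>"
    and \<tau>: "bij_betw \<tau> I J" "\<And>i. i \<in> I \<Longrightarrow> \<phi> (\<tau> i) = \<sigma> (\<phi> i)"
  shows "trop_minimizer B I J \<tau>"
  unfolding trop_minimizer_def
proof (intro conjI allI impI \<tau>(1))
  fix \<tau>' assume \<tau>': "bij_betw \<tau>' I J"
  let ?\<sigma>' = "\<phi> \<circ> \<tau>' \<circ> inv_into I \<phi>"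
  have "bij_betw ?\<sigma>' (\<phi> ` I) (\<phi> ` J)"
    using assms(1,2) \<tau>'
    by (intro bij_betw_trans bij_betw_inv_into) (auto simp: bij_betw_def inj_on_inv_into)
  then have "trop_value A (\<phi> ` I) \<sigma> \<le> trop_value A (\<phi> ` I) ?\<sigma>'"
    using \<sigma> by (simp add: trop_minimizer_def)
  moreover have "trop_value B I \<tau>' = trop_value A (\<phi> ` I) ?\<sigma>'"
    using assms(1) \<tau>' by (intro trop_value_reindex) (auto simp: entries bij_betwE)
  moreover have "trop_value B I \<tau> = trop_value A (\<phi> ` I) \<sigma>"
    using assms(1) \<tau> by (intro trop_value_reindex) (auto simp: entries bij_betwE)
  ultimately show "trop_value B I \<tau> \<le> trop_value B I \<tau>'"
    by simp
qed

lemma sym_trop_singular_pullback: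
  assumes "finite I" "inj_on \<phi> I" "inj_on \<phi> J"
    and entries: "\<And>i j. i \<in> I \<Longrightarrow> j \<in> J \<Longrightarrow> B i j = A (\<phi> i) (\<phi> j)"
    and "sym_trop_singular A (\<phi> ` I) (\<phi> ` J)"
  shows "sym_trop_singular B I J"
proof -
  have pullback: "\<exists>\<tau>. trop_minimizer B I J \<tau> \<and>
      image_mset (image \<phi>) (sym_monomial I \<tau>) = sym_monomial (\<phi> ` I) \<sigma>"
    if \<sigma>: "trop_minimizer A (\<phi> ` I) (\<phi> ` J) \<sigma>" for \<sigma>
  proof (intro exI conjI)
    let ?\<tau> = "inv_into J \<phi> \<circ> \<sigma> \<circ> \<phi>"
    have "bij_betw \<sigma> (\<phi> ` I) (\<phi> ` J)"
      using \<sigma> by (simp add: trop_minimizer_def)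
    then have "bij_betw ?\<tau> I J"
      using assms(2,3) by (intro bij_betw_trans bij_betw_inv_into) (auto simp: bij_betw_def)
    have "\<phi> (?\<tau> i) = \<sigma> (\<phi> i)" if "i \<in> I" for i
      using \<open>bij_betw \<sigma> (\<phi> ` I) (\<phi> ` J)\<close> that by (auto simp: f_inv_into_f bij_betwE)
    then show "trop_minimizer B I J ?\<tau>"
      and "image_mset (image \<phi>) (sym_monomial I ?\<tau>) = sym_monomial (\<phi> ` I) \<sigma>"
      using trop_minimizer_pullback[OF assms(2,3) entries \<sigma> \<open>bij_betw ?\<tau> I J\<close>]
        sym_monomial_reindex[OF assms(1,2)] by auto
  qed
  obtain \<sigma>1 \<sigma>2 where "trop_minimizer A (\<phi> ` I) (\<phi> ` J) \<sigma>1" "trop_minimizer A (\<phi> ` I) (\<phi> ` J) \<sigma>2"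
    and "sym_monomial (\<phi> ` I) \<sigma>1 \<noteq> sym_monomial (\<phi> ` I) \<sigma>2"
    using assms(5) by (auto simp: sym_trop_singular_def)
  then show ?thesis
    unfolding sym_trop_singular_def by (metis pullback)
qed

lemma sym_trop_singular_cong:
  assumes "finite I" "\<And>i j. i \<in> I \<Longrightarrow> j \<in> J \<Longrightarrow> A i j = B i j"
  shows "sym_trop_singular A I J \<longleftrightarrow> sym_trop_singular B I J"
  using sym_trop_singular_pullback[where \<phi> = id, of I J A B]
    sym_trop_singular_pullback[where \<phi> = id, of I J B A] assms by auto

definition dup_last_index :: "nat \<Rightarrow> nat \<Rightarrow> nat" where
  "dup_last_index n i = (if i = n then n - 1 else i)"

lemma dup_last_eq: "dup_last n A i j = A (dup_last_index n i) (dup_last_index n j)"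
  by (simp add: dup_last_def dup_last_index_def)

lemma symmetric_mat_dup_last:
  assumes "symmetric_mat n A"
  shows "symmetric_mat (n + 1) (dup_last n A)"
  unfolding symmetric_mat_def
proof (intro allI impI)
  fix i j assume "i < n + 1" "j < n + 1"
  then have "i = j \<or> dup_last_index n i < n \<and> dup_last_index n j < n"
    by (auto simp: dup_last_index_def)
  then show "dup_last n A i j = dup_last n A j i"
    using assms by (auto simp: symmetric_mat_def dup_last_eq)
qed

lemma sym_trop_singular_dup_last_iff:
  assumes "I \<subseteq> {..<n}" "J \<subseteq> {..<n}"
  shows "sym_trop_singular (dup_last n A) I J \<longleftrightarrow> sym_trop_singular A I J"
  using assms by (intro sym_trop_singular_cong) (auto simp: dup_last_def finite_subset)

lemma inj_on_dup_last_index: "\<not> {n - 1, n} \<subseteq> I \<Longrightarrow> inj_on (dup_last_index n) I"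
  by (auto simp: inj_on_def dup_last_index_def)

lemma dup_last_nonsingular_reduce:
  assumes "1 \<le> n" "I \<subseteq> {..<n + 1}" "J \<subseteq> {..<n + 1}" "card I = card J"
    and nonsingular: "\<not> sym_trop_singular (dup_last n A) I J"
  obtains I' J' where "I' \<subseteq> {..<n}" "J' \<subseteq> {..<n}" "card I' = card I" "card J' = card J"
    and "\<not> sym_trop_singular A I' J'"
proof -
  let ?\<phi> = "dup_last_index n"
  have fin: "finite I" "finite J"
    using assms(2,3) finite_subset by blast+
  have "n - 1 \<noteq> n"
    using assms(1) by simp
  then have "dup_last n A (n - 1) j = dup_last n A n j" "dup_last n A j (n - 1) = dup_last n A j n"
    for j
    by (simp_all add: dup_last_def)
  then have "\<not> {n - 1, n} \<subseteq> I" "\<not> {n - 1, n} \<subseteq> J"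
    using sym_trop_singular_if_equal_rows[OF fin assms(4) _ _ \<open>n - 1 \<noteq> n\<close>]
      sym_trop_singular_if_equal_columns[OF fin assms(4) _ _ \<open>n - 1 \<noteq> n\<close>] nonsingular
    by blast+
  then have inj: "inj_on ?\<phi> I" "inj_on ?\<phi> J"
    by (simp_all add: inj_on_dup_last_index)
  show thesis
  proof (rule that)
    show "?\<phi> ` I \<subseteq> {..<n}" "?\<phi> ` J \<subseteq> {..<n}"
      using assms(1-3) by (auto simp: dup_last_index_def)
    show "card (?\<phi> ` I) = card I" "card (?\<phi> ` J) = card J"
      using inj by (simp_all add: card_image)
    show "\<not> sym_trop_singular A (?\<phi> ` I) (?\<phi> ` J)"
      using sym_trop_singular_pullback[OF fin(1) inj] nonsingular by (auto simp: dup_last_eq)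
  qed
qed

lemma sym_trop_rank_dup_last:
  assumes "1 \<le> n"
  shows "sym_trop_rank (n + 1) (dup_last n A) = sym_trop_rank n A"
proof -
  have "{r. \<exists>I J. I \<subseteq> {..<n + 1} \<and> J \<subseteq> {..<n + 1} \<and> card I = r \<and> card J = r \<and>
          \<not> sym_trop_singular (dup_last n A) I J} =
        {r. \<exists>I J. I \<subseteq> {..<n} \<and> J \<subseteq> {..<n} \<and> card I = r \<and> card J = r \<and>
          \<not> sym_trop_singular A I J}" (is "?B = ?A")
  proof
    show "?B \<subseteq> ?A"
    proof clarify
      fix I J assume IJ: "I \<subseteq> {..<n + 1}" "J \<subseteq> {..<n + 1}" "card J = card I"
        "\<not> sym_trop_singular (dup_last n A) I J"
      obtain I' J' where "I' \<subseteq> {..<n}" "J' \<subseteq> {..<n}" "card I' = card I" "card J' = card J"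
        and "\<not> sym_trop_singular A I' J'"
        by (rule dup_last_nonsingular_reduce[OF assms IJ(1,2) IJ(3)[symmetric] IJ(4)])
      with IJ(3) show "\<exists>I' J'. I' \<subseteq> {..<n} \<and> J' \<subseteq> {..<n} \<and> card I' = card I \<and>
          card J' = card I \<and> \<not> sym_trop_singular A I' J'"
        by auto
    qed
    show "?A \<subseteq> ?B"
    proof clarify
      fix I J assume "I \<subseteq> {..<n}" "J \<subseteq> {..<n}" "card J = card I"
        "\<not> sym_trop_singular A I J"
      then show "\<exists>I' J'. I' \<subseteq> {..<n + 1} \<and> J' \<subseteq> {..<n + 1} \<and> card I' = card I \<and>
          card J' = card I \<and> \<not> sym_trop_singular (dup_last n A) I' J'"
        by (intro exI[of _ I] exI[of _ J]) (auto simp: sym_trop_singular_dup_last_iff)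
    qed
  qed
  then show ?thesis
    unfolding sym_trop_rank_def by simp
qed

theorem lemma6:
  fixes n r :: nat and A :: "nat \<Rightarrow> nat \<Rightarrow> real"
  assumes "n \<ge> 1"
    and "symmetric_mat n A"
    and "sym_trop_rank n A = r"
  shows "symmetric_mat (n + 1) (dup_last n A) \<and> sym_trop_rank (n + 1) (dup_last n A) = r"
  using symmetric_mat_dup_last[OF assms(2)] sym_trop_rank_dup_last[OF assms(1)] assms(3)
  by simp

end
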